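(* Let $M\in\Lambda_{\mathrm{NF}}$ with $M:\phi$ and blueprint $\beta$, and let $\alpha$ be a blueprint with $\alpha\Uparrow\beta$. Then there exists a term $M'\in\Lambda_{\mathrm{NF}}$ of the same kind as $M$, with blueprint $\alpha$, such that $|\mathrm{dom}(M')|\le|\mathrm{dom}(M)|$.
   Context: Formulas are built from atoms with $\to$. Let $\mathcal X$ be a countably infinite set of variables with an injective map $\mathcal O:\mathcal X\to\mathbb N$; $x<y$ iff $\mathcal O(x)<\mathcal O(y)$. Terms are pure $\lambda$-terms over $\mathcal X$, not identified up to $\alpha$-conversion; no two $\lambda$'s bind the same variable and no variable is both free and bound. $\mathrm{Free}(M)$ is the strictly increasing sequence of free variables of $M$. HRM terms: variables; $\lambda x.M$ with $M$ HRM and $x$ the greatest free variable of $M$; $(MN)$ with $M,N$ HRM and every free variable of $M$ $\le$ some free variable of $N$. Fix $\Omega$ from variables to formulas with each $\Omega^{-1}(\phi)$ infinite. Typing: $x:\Omega(x)$; $\lambda x.M:\chi\to\psi$ if $x:\chi$, $M:\psi$, $\lambda x.M$ HRM; $(MN):\psi$ if $M:\chi\to\psi$, $N:\chi$, $(MN)$ HRM. $\Lambda_{\mathrm{NF}}$ is the set of typed $\beta$-normal terms. Two terms of $\Lambda_{\mathrm{NF}}$ are of the same kind if both are variables, or both applications, or both abstractions, and they have the same type. Addresses are finite sequences of positive integers with prefix order $\le$ ($<$ strict), concatenation $\cdot$, empty address $\varepsilon$. Terms are identified with trees: $x$ is $\varepsilon\mapsto x$; $\lambda x.M$ maps $\varepsilon$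 to $\lambda x$ with subtree $M$ at $(1)$; $(M_1M_2)$ maps $\varepsilon$ to $@$ with subtrees at $(1),(2)$; $M|_a$ is the subterm at $a$, $\mathrm{dom}(M)$ the set of its addresses. For a partial tree $\pi$ (function on a set of addresses), $\pi|_a$ is $c\mapsto\pi(a\cdot c)$, and $\pi[a\leftarrow\pi']$ is the partial tree $\pi''$ with $\pi''|_a=\pi'$ and $\pi''(b)=\pi(b)$ for all $b\in\mathrm{dom}(\pi)$ with $a\not\le b$. Let $\mathfrak S$ consist of all formulas (arity 0) and symbols $@_\phi$ (arity 2). A blueprint is a finite partial tree with values in $\mathfrak S$ such that if $\alpha(a)=@_\phi$ then $\alpha|_{a\cdot(1)},\alpha|_{a\cdot(2)}$ have non-empty domains. The stable part of $M\in\Lambda_{\mathrm{NF}}$ is the set of $a\in\mathrm{dom}(M)$ with $\mathrm{Free}(M|_a)\subseteq\mathrm{Free}(M)$ and $M|_a$ a variable or an application; the blueprint of $M$ maps each $a$ in the stable part to $\psi$ if $M|_a$ is a variable of type $\psi$ and to $@_\psi$ if $M|_a$ is an application of type $\psi$. The relation $\Uparrow$ (vertical compression) is the least reflexive and transitive relation on blueprints such that whenever $a,b\in\mathrm{dom}(\beta)$, $a<b$ and $\beta(a)=\beta(b)$, we have $\beta[a\leftarrow\beta|_b]\Uparrow\beta$. *)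

theory Defs
  imports Main "HOL-Library.Sublist"
begin

datatype 'a form = Atom 'a | Imp "'a form" "'a form"

text \<open>Pure lambda terms over variables of type 'v (no alpha-identification).\<close>
datatype 'v trm = Var 'v | Lam 'v "'v trm" | App "'v trm" "'v trm"

fun fv :: "'v trm \<Rightarrow> 'v set" where
  "fv (Var x) = {x}"
| "fv (Lam x M) = fv M - {x}"
| "fv (App M N) = fv M \<union> fv N"

fun binders :: "'v trm \<Rightarrow> 'v list" where
  "binders (Var x) = []"
| "binders (Lam x M) = x # binders M"
| "binders (App M N) = binders M @ binders N"

definition wf_trm :: "'v trm \<Rightarrow> bool" where
  "wf_trm M \<longleftrightarrow> distinct (binders M) \<and> set (binders M) \<inter> fv M = {}"

text \<open>The order on variables is induced by the injective map ord (the paper's O):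
  x < y iff ord x < ord y.\<close>
fun hrm :: "('v \<Rightarrow> nat) \<Rightarrow> 'v trm \<Rightarrow> bool" where
  "hrm ord (Var x) = True"
| "hrm ord (Lam x M) \<longleftrightarrow> hrm ord M \<and> x \<in> fv M \<and> (\<forall>y\<in>fv M. ord y \<le> ord x)"
| "hrm ord (App M N) \<longleftrightarrow> hrm ord M \<and> hrm ord N \<and>
      (\<forall>y\<in>fv M. \<exists>z\<in>fv N. ord y \<le> ord z)"

inductive has_type :: "('v \<Rightarrow> nat) \<Rightarrow> ('v \<Rightarrow> 'a form) \<Rightarrow> 'v trm \<Rightarrow> 'a form \<Rightarrow> bool" where
  ty_var: "has_type ord \<Omega> (Var x) (\<Omega> x)"
| ty_lam: "has_type ord \<Omega> M \<psi> \<Longrightarrow> hrm ord (Lam x M) \<Longrightarrow>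
           has_type ord \<Omega> (Lam x M) (Imp (\<Omega> x) \<psi>)"
| ty_app: "has_type ord \<Omega> M (Imp \<chi> \<psi>) \<Longrightarrow> has_type ord \<Omega> N \<chi> \<Longrightarrow> hrm ord (App M N) \<Longrightarrow>
           has_type ord \<Omega> (App M N) \<psi>"

definition type_of :: "('v \<Rightarrow> nat) \<Rightarrow> ('v \<Rightarrow> 'a form) \<Rightarrow> 'v trm \<Rightarrow> 'a form" where
  "type_of ord \<Omega> M = (THE \<psi>. has_type ord \<Omega> M \<psi>)"

fun beta_normal :: "'v trm \<Rightarrow> bool" where
  "beta_normal (Var x) = True"
| "beta_normal (Lam x M) = beta_normal M"
| "beta_normal (App M N) \<longleftrightarrow> (\<forall>x P. M \<noteq> Lam x P) \<and> beta_normal M \<and> beta_normal N"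

definition LNF :: "('v \<Rightarrow> nat) \<Rightarrow> ('v \<Rightarrow> 'a form) \<Rightarrow> 'v trm set" where
  "LNF ord \<Omega> = {M. wf_trm M \<and> (\<exists>\<psi>. has_type ord \<Omega> M \<psi>) \<and> beta_normal M}"

fun kind :: "'v trm \<Rightarrow> nat" where
  "kind (Var x) = 0"
| "kind (App M N) = 1"
| "kind (Lam x M) = 2"

definition same_kind :: "('v \<Rightarrow> nat) \<Rightarrow> ('v \<Rightarrow> 'a form) \<Rightarrow> 'v trm \<Rightarrow> 'v trm \<Rightarrow> bool" where
  "same_kind ord \<Omega> M N \<longleftrightarrow> kind M = kind N \<and> type_of ord \<Omega> M = type_of ord \<Omega> N"

type_synonym addr = "nat list"

fun subt :: "'v trm \<Rightarrow> addr \<Rightarrow> 'v trm option" where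
  "subt M [] = Some M"
| "subt (Lam x M) (i # a) = (if i = 1 then subt M a else None)"
| "subt (App M N) (i # a) = (if i = 1 then subt M a else if i = 2 then subt N a else None)"
| "subt (Var x) (i # a) = None"

definition tdom :: "'v trm \<Rightarrow> addr set" where
  "tdom M = {a. subt M a \<noteq> None}"

text \<open>Symbols: formulas (arity 0) and @_phi (arity 2).\<close>
datatype 'a sym = FormS "'a form" | AppS "'a form"

type_synonym 'b ptree = "addr \<Rightarrow> 'b option"

definition ptsub :: "'b ptree \<Rightarrow> addr \<Rightarrow> 'b ptree" where
  "ptsub \<pi> a = (\<lambda>c. \<pi> (a @ c))"

definition ptrepl :: "'b ptree \<Rightarrow> addr \<Rightarrow> 'b ptree \<Rightarrow> 'b ptree" where
  "ptrepl \<pi> a \<pi>' = (\<lambda>b. if prefix a b then \<pi>' (drop (length a) b) else \<pi> b)"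

definition blueprint :: "'a sym ptree \<Rightarrow> bool" where
  "blueprint \<alpha> \<longleftrightarrow> finite (dom \<alpha>) \<and> (\<forall>a\<in>dom \<alpha>. \<forall>i\<in>set a. 0 < i) \<and>
     (\<forall>a \<phi>. \<alpha> a = Some (AppS \<phi>) \<longrightarrow>
        dom (ptsub \<alpha> (a @ [1])) \<noteq> {} \<and> dom (ptsub \<alpha> (a @ [2])) \<noteq> {})"

definition stable_part :: "'v trm \<Rightarrow> addr set" where
  "stable_part M = {a \<in> tdom M. \<exists>N. subt M a = Some N \<and> fv N \<subseteq> fv M \<and> kind N \<noteq> 2}"

definition blueprint_of :: "('v \<Rightarrow> nat) \<Rightarrow> ('v \<Rightarrow> 'a form) \<Rightarrow> 'v trm \<Rightarrow> 'a sym ptree" where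
  "blueprint_of ord \<Omega> M = (\<lambda>a. if a \<in> stable_part M then
      (case subt M a of
         Some (Var x) \<Rightarrow> Some (FormS (type_of ord \<Omega> (Var x)))
       | Some (App P Q) \<Rightarrow> Some (AppS (type_of ord \<Omega> (App P Q)))
       | _ \<Rightarrow> None)
     else None)"

inductive vcomp :: "'a sym ptree \<Rightarrow> 'a sym ptree \<Rightarrow> bool" where
  vc_refl: "blueprint \<beta> \<Longrightarrow> vcomp \<beta> \<beta>"
| vc_step: "blueprint \<beta> \<Longrightarrow> a \<in> dom \<beta> \<Longrightarrow> b \<in> dom \<beta> \<Longrightarrow> strict_prefix a b \<Longrightarrow>
            \<beta> a = \<beta> b \<Longrightarrow> vcomp (ptrepl \<beta> a (ptsub \<beta> b)) \<beta>"
| vc_trans: "vcomp \<alpha> \<beta> \<Longrightarrow> vcomp \<beta> \<gamma> \<Longrightarrow> vcomp \<alpha> \<gamma>"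

end

theory Submission
  imports Defs
begin

text \<open>
  Pass to a nameless representation: bound variables become de Bruijn indices and each free
  variable becomes an anonymous leaf recording only its type. The nameless form of a term
  determines its blueprint, kind, type and size, and that of a term of \<Lambda>_NF satisfies a name-free
  version of the HRM condition. A compression step \<beta>[a \<leftarrow> \<beta>|_b] is realised by grafting the
  subterm at b onto the address a: both subterms lie in the stable part, so they are closed
  non-abstractions, equal labels give them equal types, and each contains a free leaf; hence
  typing, normality and the name-free HRM condition survive, and the size does not grow.
  Conversely every typed normal nameless term satisfying the name-free HRM condition is the
  nameless form of a term of \<Lambda>_NF: binders are named after their addresses, free leaves get
  pairwise distinct fresh names, and the variable order puts the free variables first, in
  left-to-right order, followed by the binders by depth.
\<close>

section \<open>Nameless terms\<close>

text \<open>Free variables are anonymous leaves carrying only their type.\<close>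
datatype 'a dterm =
  DFree "'a form" | DBound nat | DLam "'a form" "'a dterm" | DApp "'a dterm" "'a dterm"

fun loose :: "'a dterm \<Rightarrow> nat set" where
  "loose (DFree t) = {}"
| "loose (DBound i) = {i}"
| "loose (DLam s X) = (\<lambda>i. i - 1) ` (loose X - {0})"
| "loose (DApp X Y) = loose X \<union> loose Y"

fun free_leaves :: "'a dterm \<Rightarrow> nat" where
  "free_leaves (DFree t) = 1"
| "free_leaves (DBound i) = 0"
| "free_leaves (DLam s X) = free_leaves X"
| "free_leaves (DApp X Y) = free_leaves X + free_leaves Y"

definition has_vars :: "'a dterm \<Rightarrow> bool" where
  "has_vars X \<longleftrightarrow> 0 < free_leaves X \<or> loose X \<noteq> {}"

fun dtype :: "'a form list \<Rightarrow> 'a dterm \<Rightarrow> 'a form option" where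
  "dtype G (DFree t) = Some t"
| "dtype G (DBound i) = (if i < length G then Some (G ! i) else None)"
| "dtype G (DLam s X) = map_option (Imp s) (dtype (s # G) X)"
| "dtype G (DApp X Y) =
     (case dtype G X of Some (Imp a b) \<Rightarrow> if dtype G Y = Some a then Some b else None | _ \<Rightarrow> None)"

fun dnormal :: "'a dterm \<Rightarrow> bool" where
  "dnormal (DFree t) = True"
| "dnormal (DBound i) = True"
| "dnormal (DLam s X) = dnormal X"
| "dnormal (DApp X Y) = ((\<forall>s Z. X \<noteq> DLam s Z) \<and> dnormal X \<and> dnormal Y)"

text \<open>The HRM condition without names: a smaller index denotes a deeper and hence greater
  bound variable, and free leaves are to be named below all binders.\<close>
fun dhrm :: "'a dterm \<Rightarrow> bool" where
  "dhrm (DFree t) = True"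
| "dhrm (DBound i) = True"
| "dhrm (DLam s X) = (0 \<in> loose X \<and> dhrm X)"
| "dhrm (DApp X Y) = (dhrm X \<and> dhrm Y \<and> (\<forall>i\<in>loose X. \<exists>j\<in>loose Y. j \<le> i) \<and>
     (has_vars X \<longrightarrow> has_vars Y))"

definition dLNF :: "'a dterm set" where
  "dLNF = {X. dtype [] X \<noteq> None \<and> dhrm X \<and> dnormal X}"

fun dsubterm :: "'a dterm \<Rightarrow> addr \<Rightarrow> 'a dterm option" where
  "dsubterm X [] = Some X"
| "dsubterm (DLam s X) (i # a) = (if i = 1 then dsubterm X a else None)"
| "dsubterm (DApp X Y) (i # a) =
     (if i = 1 then dsubterm X a else if i = 2 then dsubterm Y a else None)"
| "dsubterm (DFree t) (i # a) = None"
| "dsubterm (DBound j) (i # a) = None"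

fun graft :: "'a dterm \<Rightarrow> addr \<Rightarrow> 'a dterm \<Rightarrow> 'a dterm" where
  "graft X [] Z = Z"
| "graft (DLam s X) (i # a) Z = (if i = 1 then DLam s (graft X a Z) else DLam s X)"
| "graft (DApp X Y) (i # a) Z =
     (if i = 1 then DApp (graft X a Z) Y else if i = 2 then DApp X (graft Y a Z) else DApp X Y)"
| "graft (DFree t) (i # a) Z = DFree t"
| "graft (DBound j) (i # a) Z = DBound j"

fun dsize :: "'a dterm \<Rightarrow> nat" where
  "dsize (DFree t) = 1"
| "dsize (DBound i) = 1"
| "dsize (DLam s X) = Suc (dsize X)"
| "dsize (DApp X Y) = Suc (dsize X + dsize Y)"

definition ddom :: "'a dterm \<Rightarrow> addr set" where
  "ddom X = {a. dsubterm X a \<noteq> None}"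

fun dkind :: "'a dterm \<Rightarrow> nat" where
  "dkind (DFree t) = 0"
| "dkind (DBound i) = 0"
| "dkind (DApp X Y) = 1"
| "dkind (DLam s X) = 2"

fun dlabel :: "'a dterm \<Rightarrow> 'a sym option" where
  "dlabel (DFree t) = Some (FormS t)"
| "dlabel (DApp X Y) =
     (if loose (DApp X Y) = {} then Some (AppS (the (dtype [] (DApp X Y)))) else None)"
| "dlabel _ = None"

definition dblueprint :: "'a dterm \<Rightarrow> 'a sym ptree" where
  "dblueprint X = (\<lambda>c. Option.bind (dsubterm X c) dlabel)"

lemma ddom_cases:
  "ddom (DFree t) = {[]}" "ddom (DBound j) = {[]}"
  "ddom (DLam s X) = insert [] (Cons 1 ` ddom X)"
  "ddom (DApp X Y) = insert [] (Cons 1 ` ddom X \<union> Cons 2 ` ddom Y)"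
  unfolding ddom_def by (rule set_eqI; case_tac x; auto split: if_splits)+

lemma finite_card_ddom: "finite (ddom X) \<and> card (ddom X) = dsize X"
proof (induction X)
  case (DLam s X)
  have "card (Cons 1 ` ddom X) = card (ddom X)" by (rule card_image) simp
  moreover have "[] \<notin> Cons 1 ` ddom X" by auto
  ultimately show ?case using DLam by (simp add: ddom_cases)
next
  case (DApp X Y)
  have "card (Cons 1 ` ddom X \<union> Cons 2 ` ddom Y) = card (Cons 1 ` ddom X) + card (Cons 2 ` ddom Y)"
    using DApp by (intro card_Un_disjoint) auto
  then show ?case using DApp by (simp add: ddom_cases card_image image_iff)
qed (simp_all add: ddom_cases)

lemma mem_loose_DLam: "i \<in> loose (DLam s X) \<longleftrightarrow> Suc i \<in> loose X"
proof
  assume "i \<in> loose (DLam s X)"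
  then obtain j where "j \<in> loose X" "j \<noteq> 0" "i = j - 1" by auto
  then show "Suc i \<in> loose X" by (cases j) auto
qed (force simp: image_iff)

lemma dtype_cong:
  "\<forall>i\<in>loose W. i < length G \<and> i < length G' \<and> G ! i = G' ! i \<Longrightarrow> dtype G W = dtype G' W"
proof (induction W arbitrary: G G')
  case (DLam s W)
  have "\<forall>i\<in>loose W. i < length (s # G) \<and> i < length (s # G') \<and> (s # G) ! i = (s # G') ! i"
  proof
    fix i assume "i \<in> loose W"
    then show "i < length (s # G) \<and> i < length (s # G') \<and> (s # G) ! i = (s # G') ! i"
      using DLam.prems by (cases i) (auto simp del: loose.simps simp: mem_loose_DLam)
  qed
  then show ?case using DLam.IH[of "s # G" "s # G'"] by simp
next
  case (DApp W1 W2)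
  then have "dtype G W1 = dtype G' W1" "dtype G W2 = dtype G' W2" by auto
  then show ?case by (simp only: dtype.simps)
qed auto

lemma dtype_closed: "loose W = {} \<Longrightarrow> dtype G W = dtype [] W"
  by (rule dtype_cong) simp

lemma dtype_closed_eq:
  "loose W = {} \<Longrightarrow> loose Z = {} \<Longrightarrow> dtype [] W = dtype [] Z \<Longrightarrow> dtype G W = dtype G Z"
  using dtype_closed[of W G] dtype_closed[of Z G] by simp

lemma loose_less_length: "dtype G W \<noteq> None \<Longrightarrow> i \<in> loose W \<Longrightarrow> i < length G"
proof (induction W arbitrary: G i)
  case (DLam s W)
  then show ?case by (fastforce simp: mem_loose_DLam)
qed (auto split: if_splits option.splits form.splits)

lemma loose_empty_if_dtype: "dtype [] X \<noteq> None \<Longrightarrow> loose X = {}"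
  using loose_less_length by fastforce

lemma dsubterm_append:
  "dsubterm X (a @ e) = (case dsubterm X a of None \<Rightarrow> None | Some W \<Rightarrow> dsubterm W e)"
  by (induction X a rule: dsubterm.induct) auto

lemma dsubterm_graft_inside: "dsubterm X a \<noteq> None \<Longrightarrow> dsubterm (graft X a Z) (a @ d) = dsubterm Z d"
  by (induction X a rule: dsubterm.induct) auto

lemma dsubterm_graft_disjoint:
  "\<not> prefix a c \<Longrightarrow> \<not> prefix c a \<Longrightarrow> dsubterm (graft X a Z) c = dsubterm X c"
  by (induction X a arbitrary: c rule: dsubterm.induct) (case_tac c; auto)+

lemma dsubterm_graft_above:
  "dsubterm X c = Some V \<Longrightarrow> dsubterm (graft X (c @ d) Z) c = Some (graft V d Z)"
  by (induction X c rule: dsubterm.induct) (auto split: if_splits)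

lemma loose_graft:
  "dsubterm X a = Some W \<Longrightarrow> loose W = {} \<Longrightarrow> loose Z = {} \<Longrightarrow> loose (graft X a Z) = loose X"
  by (induction X a rule: dsubterm.induct) (auto split: if_splits)

lemma free_leaves_graft: "dsubterm X a \<noteq> None \<Longrightarrow> 0 < free_leaves Z \<Longrightarrow> 0 < free_leaves (graft X a Z)"
  by (induction X a rule: dsubterm.induct) (auto split: if_splits)

lemma free_leaves_dsubterm: "dsubterm X a = Some W \<Longrightarrow> 0 < free_leaves W \<Longrightarrow> 0 < free_leaves X"
  by (induction X a rule: dsubterm.induct) (auto split: if_splits)

lemma dtype_graft:
  "dsubterm X a = Some W \<Longrightarrow> \<forall>G. dtype G W = dtype G Z \<Longrightarrow> dtype G (graft X a Z) = dtype G X"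
  by (induction X a arbitrary: G rule: dsubterm.induct)
    (auto split: if_split_asm cong: option.case_cong form.case_cong)

lemma dsize_graft: "dsubterm X a = Some W \<Longrightarrow> dsize (graft X a Z) + dsize W = dsize X + dsize Z"
  by (induction X a rule: dsubterm.induct) (auto split: if_splits)

lemma dsize_dsubterm: "dsubterm X a = Some W \<Longrightarrow> dsize W \<le> dsize X"
  by (induction X a rule: dsubterm.induct) (auto split: if_splits)

lemma dkind_graft: "dkind (graft X a Z) = (if a = [] then dkind Z else dkind X)"
  by (cases a; cases X) auto

lemma dhrm_dsubterm: "dhrm X \<Longrightarrow> dsubterm X c = Some W \<Longrightarrow> dhrm W"
  by (induction X c rule: dsubterm.induct) (auto split: if_splits)

lemma dnormal_dsubterm: "dnormal X \<Longrightarrow> dsubterm X c = Some W \<Longrightarrow> dnormal W"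
  by (induction X c rule: dsubterm.induct) (auto split: if_splits)

lemma dtype_dsubterm: "dtype G X \<noteq> None \<Longrightarrow> dsubterm X c = Some W \<Longrightarrow> \<exists>G'. dtype G' W \<noteq> None"
  by (induction X c arbitrary: G rule: dsubterm.induct)
    (auto split: if_splits option.splits form.splits)

lemma free_leaves_pos_if_closed:
  "loose W = {} \<Longrightarrow> dnormal W \<Longrightarrow> dkind W \<noteq> 2 \<Longrightarrow> 0 < free_leaves W"
proof (induction W)
  case (DApp X Y)
  then have "dkind X \<noteq> 2" by (cases X) auto
  then show ?case using DApp by auto
qed auto

lemma dhrm_graft:
  assumes "dhrm Z" "loose W = {}" "loose Z = {}" "0 < free_leaves W" "0 < free_leaves Z"
  shows "dhrm X \<Longrightarrow> dsubterm X a = Some W \<Longrightarrow> dhrm (graft X a Z)"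
proof (induction X a rule: dsubterm.induct)
  case (3 X Y i a)
  have "has_vars (graft X a Z) \<and> has_vars X" if "dsubterm X a = Some W"
    using that assms unfolding has_vars_def
    by (metis free_leaves_graft free_leaves_dsubterm option.distinct(1))
  moreover have "has_vars (graft Y a Z)" if "dsubterm Y a = Some W"
    using that assms unfolding has_vars_def by (metis free_leaves_graft option.distinct(1))
  ultimately show ?case using 3 assms by (auto simp: loose_graft split: if_splits)
qed (use assms in \<open>auto simp: loose_graft split: if_splits\<close>)

lemma dnormal_DApp_iff: "dnormal (DApp X Y) \<longleftrightarrow> dkind X \<noteq> 2 \<and> dnormal X \<and> dnormal Y"
  by (cases X) auto

lemma dnormal_graft:
  "dnormal X \<Longrightarrow> dnormal Z \<Longrightarrow> dkind Z \<noteq> 2 \<Longrightarrow> dsubterm X a \<noteq> None \<Longrightarrow>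
   dnormal (graft X a Z)"
proof (induction X a rule: dsubterm.induct)
  case (3 X Y i a)
  then show ?case
    using dkind_graft[of X a Z]
    by (auto simp: dnormal_DApp_iff simp del: dnormal.simps(4) split: if_splits)
qed auto

lemma dlabel_graft:
  assumes "d \<noteq> []" "dsubterm V d = Some W" "loose W = {}" "loose Z = {}" "\<forall>G. dtype G W = dtype G Z"
  shows "dlabel (graft V d Z) = dlabel V"
proof -
  have "loose (graft V d Z) = loose V" "dtype [] (graft V d Z) = dtype [] V"
    using loose_graft[OF assms(2-4)] dtype_graft[OF assms(2,5)] by auto
  then show ?thesis using assms(1) by (cases V; cases d) auto
qed

lemma dblueprint_graft:
  assumes W: "dsubterm X a = Some W" and closed: "loose W = {}" "loose Z = {}"
    and same_type: "\<forall>G. dtype G W = dtype G Z"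
  shows "dblueprint (graft X a Z) = ptrepl (dblueprint X) a (dblueprint Z)"
proof
  fix c
  consider d where "c = a @ d" | d where "a = c @ d" "d \<noteq> []" | "\<not> prefix a c" "\<not> prefix c a"
    by (metis append_Nil2 prefix_def)
  then show "dblueprint (graft X a Z) c = ptrepl (dblueprint X) a (dblueprint Z) c"
  proof cases
    case 1
    then show ?thesis using dsubterm_graft_inside[of X a Z d] W
      unfolding dblueprint_def ptrepl_def by simp
  next
    case 2
    then obtain V where V: "dsubterm X c = Some V" "dsubterm V d = Some W"
      using W dsubterm_append[of X c d] by (cases "dsubterm X c") auto
    then have "dsubterm (graft X a Z) c = Some (graft V d Z)"
      using dsubterm_graft_above 2(1) by blast
    then show ?thesis using 2 V dlabel_graft[OF 2(2) V(2) closed same_type]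
      unfolding dblueprint_def ptrepl_def by (auto simp: prefix_def)
  next
    case 3
    then show ?thesis using dsubterm_graft_disjoint[of a c X Z]
      unfolding dblueprint_def ptrepl_def by simp
  qed
qed

lemma ptsub_dblueprint: "dsubterm X b = Some W \<Longrightarrow> ptsub (dblueprint X) b = dblueprint W"
  unfolding ptsub_def dblueprint_def by (simp add: dsubterm_append)

lemma dlabel_not_None: "dlabel W \<noteq> None \<Longrightarrow> loose W = {} \<and> dkind W \<noteq> 2"
  by (cases W) (auto split: if_splits)

lemma dlabel_eq:
  assumes "dtype [] W \<noteq> None" "dtype [] W' \<noteq> None" "dlabel W = dlabel W'" "dlabel W \<noteq> None"
  shows "dkind W = dkind W' \<and> dtype [] W = dtype [] W'"
proof (cases W)
  case (DApp X Y)
  then obtain X' Y' where "W' = DApp X' Y'"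
    using assms(3,4) by (cases W') (auto split: if_splits)
  then show ?thesis using DApp assms by (auto split: if_splits)
qed (use assms in \<open>auto split: if_splits; cases W'; auto split: if_splits\<close>)+

lemma dLNF_dsubterm:
  assumes "X \<in> dLNF" "dsubterm X a = Some W" "loose W = {}"
  shows "W \<in> dLNF"
proof -
  obtain G where "dtype G W \<noteq> None" using assms(1,2) dtype_dsubterm unfolding dLNF_def by blast
  then have "dtype [] W \<noteq> None" using dtype_closed[OF assms(3), of G] by simp
  then show ?thesis using assms(1,2) dhrm_dsubterm dnormal_dsubterm unfolding dLNF_def by blast
qed

lemma graft_dLNF:
  assumes "X \<in> dLNF" "dsubterm X a = Some W" "W \<in> dLNF" "Z \<in> dLNF"
    and "dkind W \<noteq> 2" "dkind Z \<noteq> 2" "dtype [] W = dtype [] Z"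
  shows "graft X a Z \<in> dLNF" "dtype [] (graft X a Z) = dtype [] X"
proof -
  have closed: "loose W = {}" "loose Z = {}"
    using assms(3,4) loose_empty_if_dtype unfolding dLNF_def by auto
  have same_type: "\<forall>G. dtype G W = dtype G Z" by (intro allI dtype_closed_eq[OF closed assms(7)])
  show type: "dtype [] (graft X a Z) = dtype [] X" using dtype_graft[OF assms(2) same_type] .
  have "0 < free_leaves W" "0 < free_leaves Z"
    using assms(3-6) closed free_leaves_pos_if_closed unfolding dLNF_def by auto
  then have "dhrm (graft X a Z)"
    using assms(1,2,4) closed dhrm_graft unfolding dLNF_def by blast
  moreover have "dnormal (graft X a Z)"
    using assms(1,2,4,6) dnormal_graft unfolding dLNF_def by blast
  ultimately show "graft X a Z \<in> dLNF" using type assms(1) unfolding dLNF_def by simp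
qed

lemma dLNF_compress_step:
  assumes X: "X \<in> dLNF" and a: "a \<in> dom (dblueprint X)" and b: "b \<in> dom (dblueprint X)"
    and ab: "strict_prefix a b" and same_label: "dblueprint X a = dblueprint X b"
  obtains Y where "Y \<in> dLNF" "dblueprint Y = ptrepl (dblueprint X) a (ptsub (dblueprint X) b)"
    "dkind Y = dkind X" "dtype [] Y = dtype [] X" "dsize Y \<le> dsize X"
proof -
  obtain Wa Wb where Wa: "dsubterm X a = Some Wa" "dlabel Wa \<noteq> None"
    and Wb: "dsubterm X b = Some Wb" "dlabel Wb = dlabel Wa"
    using a b same_label unfolding dblueprint_def by (auto split: Option.bind_splits)
  have closed: "loose Wa = {}" "loose Wb = {}" and kinds: "dkind Wa \<noteq> 2" "dkind Wb \<noteq> 2"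
    using dlabel_not_None Wa(2) Wb(2) by metis+
  have LNF: "Wa \<in> dLNF" "Wb \<in> dLNF"
    using dLNF_dsubterm[OF X] Wa(1) Wb(1) closed by auto
  have same: "dkind Wb = dkind Wa" "dtype [] Wa = dtype [] Wb"
    using dlabel_eq[of Wb Wa] LNF Wa(2) Wb(2) unfolding dLNF_def by auto
  obtain e where e: "b = a @ e" using ab by (auto simp: strict_prefix_def prefix_def)
  then have "dsubterm Wa e = Some Wb" using Wa(1) Wb(1) by (simp add: dsubterm_append)
  define Y where "Y = graft X a Wb"
  have "\<forall>G. dtype G Wa = dtype G Wb" by (intro allI dtype_closed_eq[OF closed same(2)])
  then have "dblueprint Y = ptrepl (dblueprint X) a (ptsub (dblueprint X) b)"
    unfolding Y_def ptsub_dblueprint[OF Wb(1)] using dblueprint_graft[OF Wa(1) closed] by simp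
  moreover have "dkind Y = dkind X"
    using dkind_graft[of X a Wb] Wa(1) same(1) by (cases "a = []") (simp_all add: Y_def)
  moreover have "dsize Y \<le> dsize X"
    using dsize_graft[OF Wa(1), of Wb] dsize_dsubterm[OF \<open>dsubterm Wa e = Some Wb\<close>]
    by (simp add: Y_def)
  ultimately show thesis
    using that graft_dLNF[OF X Wa(1) LNF kinds same(2)] unfolding Y_def by simp
qed

lemma vcomp_dLNF:
  "vcomp \<alpha> \<beta> \<Longrightarrow> \<beta> = dblueprint X \<Longrightarrow> X \<in> dLNF \<Longrightarrow>
   \<exists>Y\<in>dLNF. dblueprint Y = \<alpha> \<and> dkind Y = dkind X \<and> dtype [] Y = dtype [] X \<and> dsize Y \<le> dsize X"
proof (induction arbitrary: X rule: vcomp.induct)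
  case (vc_step \<beta> a b)
  then obtain Y where "Y \<in> dLNF" "dblueprint Y = ptrepl \<beta> a (ptsub \<beta> b)"
    "dkind Y = dkind X" "dtype [] Y = dtype [] X" "dsize Y \<le> dsize X"
    using dLNF_compress_step[of X a b] by blast
  then show ?case by blast
next
  case (vc_trans \<alpha> \<beta> \<gamma>)
  obtain Y where Y: "Y \<in> dLNF" "dblueprint Y = \<beta>" "dkind Y = dkind X" "dtype [] Y = dtype [] X"
    "dsize Y \<le> dsize X"
    using vc_trans.IH(2)[OF vc_trans.prems] by blast
  then show ?case using vc_trans.IH(1)[OF Y(2)[symmetric] Y(1)] by (auto intro: le_trans)
qed blast

section \<open>From named terms to nameless terms\<close>

fun infer_type :: "('v \<Rightarrow> 'a form) \<Rightarrow> 'v trm \<Rightarrow> 'a form option" where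
  "infer_type \<Omega> (Var x) = Some (\<Omega> x)"
| "infer_type \<Omega> (Lam x M) = map_option (Imp (\<Omega> x)) (infer_type \<Omega> M)"
| "infer_type \<Omega> (App M N) =
     (case infer_type \<Omega> M of
        Some (Imp a b) \<Rightarrow> if infer_type \<Omega> N = Some a then Some b else None
      | _ \<Rightarrow> None)"

lemma has_type_iff: "has_type ord \<Omega> M \<psi> \<longleftrightarrow> infer_type \<Omega> M = Some \<psi> \<and> hrm ord M"
proof
  show "has_type ord \<Omega> M \<psi> \<Longrightarrow> infer_type \<Omega> M = Some \<psi> \<and> hrm ord M"
    by (induction rule: has_type.induct) auto
next
  show "infer_type \<Omega> M = Some \<psi> \<and> hrm ord M \<Longrightarrow> has_type ord \<Omega> M \<psi>"
  proof (induction M arbitrary: \<psi>)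
    case (Var x)
    then show ?case using has_type.ty_var by fastforce
  next
    case (Lam x M)
    then show ?case by (auto intro: has_type.ty_lam)
  next
    case (App M N)
    then show ?case by (auto intro: has_type.ty_app split: option.splits form.splits if_splits)
  qed
qed

lemma type_of_eq: "has_type ord \<Omega> M \<psi> \<Longrightarrow> type_of ord \<Omega> M = \<psi>"
  unfolding type_of_def by (rule the_equality) (auto simp: has_type_iff)

lemma LNF_iff:
  "M \<in> LNF ord \<Omega> \<longleftrightarrow> wf_trm M \<and> infer_type \<Omega> M \<noteq> None \<and> hrm ord M \<and> beta_normal M"
  unfolding LNF_def using has_type_iff by fastforce

lemma infer_type_subt: "infer_type \<Omega> M \<noteq> None \<Longrightarrow> subt M c = Some N \<Longrightarrow> infer_type \<Omega> N \<noteq> None"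
  by (induction M c rule: subt.induct) (auto split: if_splits option.splits form.splits)

lemma hrm_subt: "hrm ord M \<Longrightarrow> subt M c = Some N \<Longrightarrow> hrm ord N"
  by (induction M c rule: subt.induct) (auto split: if_splits)

fun position :: "'v list \<Rightarrow> 'v \<Rightarrow> nat" where
  "position [] x = 0"
| "position (y # ys) x = (if x = y then 0 else Suc (position ys x))"

lemma position_less [simp]: "x \<in> set env \<Longrightarrow> position env x < length env"
  by (induction env) auto

lemma nth_position [simp]: "x \<in> set env \<Longrightarrow> env ! position env x = x"
  by (induction env) auto

lemma position_nth: "distinct env \<Longrightarrow> i < length env \<Longrightarrow> position env (env ! i) = i"
  by (induction env arbitrary: i) (auto simp: less_Suc_eq_0_disj)

lemma position_le_if_in_take: "z \<in> set (take (Suc i) env) \<Longrightarrow> position env z \<le> i"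
proof (induction env arbitrary: i)
  case (Cons y ys)
  then show ?case by (cases i) auto
qed auto

text \<open>The list env holds the enclosing binders, innermost first.\<close>
fun debruijn :: "('v \<Rightarrow> 'a form) \<Rightarrow> 'v list \<Rightarrow> 'v trm \<Rightarrow> 'a dterm" where
  "debruijn \<Omega> env (Var x) = (if x \<in> set env then DBound (position env x) else DFree (\<Omega> x))"
| "debruijn \<Omega> env (Lam x M) = DLam (\<Omega> x) (debruijn \<Omega> (x # env) M)"
| "debruijn \<Omega> env (App M N) = DApp (debruijn \<Omega> env M) (debruijn \<Omega> env N)"

lemma dtype_debruijn: "dtype (map \<Omega> env) (debruijn \<Omega> env M) = infer_type \<Omega> M"
proof (induction M arbitrary: env)
  case (Lam x M)
  then show ?case using Lam.IH[of "x # env"] by simp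
next
  case (App M N)
  then show ?case by (simp only: debruijn.simps dtype.simps infer_type.simps)
qed auto

lemma loose_debruijn: "loose (debruijn \<Omega> env M) = position env ` (fv M \<inter> set env)"
proof (induction M arbitrary: env)
  case (Lam x M)
  show ?case
  proof (intro set_eqI iffI)
    fix i assume "i \<in> loose (debruijn \<Omega> env (Lam x M))"
    then obtain y where "y \<in> fv M" "y \<in> set (x # env)" "Suc i = position (x # env) y"
      using Lam.IH by (auto simp: mem_loose_DLam simp del: loose.simps)
    then show "i \<in> position env ` (fv (Lam x M) \<inter> set env)" by (auto split: if_splits)
  next
    fix i assume "i \<in> position env ` (fv (Lam x M) \<inter> set env)"
    then have "Suc i \<in> loose (debruijn \<Omega> (x # env) M)" using Lam.IH by auto
    then show "i \<in> loose (debruijn \<Omega> env (Lam x M))" by (simp add: mem_loose_DLam del: loose.simps)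
  qed
qed auto

lemma free_leaves_debruijn: "0 < free_leaves (debruijn \<Omega> env M) \<longleftrightarrow> fv M - set env \<noteq> {}"
  by (induction M arbitrary: env) auto

lemma has_vars_debruijn: "has_vars (debruijn \<Omega> env M) \<longleftrightarrow> fv M \<noteq> {}"
  unfolding has_vars_def free_leaves_debruijn loose_debruijn by auto

lemma dkind_debruijn: "dkind (debruijn \<Omega> env M) = kind M"
  by (cases M) auto

lemma dnormal_debruijn: "dnormal (debruijn \<Omega> env M) = beta_normal M"
proof (induction M arbitrary: env)
  case (App M N)
  then show ?case using dkind_debruijn[of \<Omega> env M]
    by (auto simp: dnormal_DApp_iff elim!: kind.elims simp del: dnormal.simps(4))
qed auto

lemma dsubterm_debruijn_None: "dsubterm (debruijn \<Omega> env M) c = None \<longleftrightarrow> subt M c = None"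
  by (induction M c arbitrary: env rule: subt.induct) auto

lemma dsubterm_debruijn:
  "subt M c = Some N \<Longrightarrow> \<exists>e. dsubterm (debruijn \<Omega> env M) c = Some (debruijn \<Omega> (e @ env) N) \<and>
     set e \<subseteq> set (binders M) \<and> fv N \<subseteq> fv M \<union> set e"
proof (induction M c arbitrary: env rule: subt.induct)
  case (1 M)
  then show ?case by (intro exI[of _ "[]"]) auto
next
  case (2 x M i a)
  then have "i = 1" "subt M a = Some N" by (auto split: if_splits)
  with "2.IH"[of "x # env"] obtain e where
    "dsubterm (debruijn \<Omega> (x # env) M) a = Some (debruijn \<Omega> (e @ x # env) N)"
    "set e \<subseteq> set (binders M)" "fv N \<subseteq> fv M \<union> set e"
    by auto
  then show ?case using 2 by (intro exI[of _ "e @ [x]"]) (auto split: if_splits)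
next
  case (3 M1 M2 i a)
  consider "i = 1" "subt M1 a = Some N" | "i = 2" "subt M2 a = Some N"
    using "3.prems" by (auto split: if_splits)
  then show ?case
  proof cases
    case 1
    with "3.IH"(1)[of env] obtain e where
      "dsubterm (debruijn \<Omega> env M1) a = Some (debruijn \<Omega> (e @ env) N)"
      "set e \<subseteq> set (binders M1)" "fv N \<subseteq> fv M1 \<union> set e"
      by auto
    with 1 show ?thesis by (intro exI[of _ e]) auto
  next
    case 2
    with "3.IH"(2)[of env] obtain e where
      "dsubterm (debruijn \<Omega> env M2) a = Some (debruijn \<Omega> (e @ env) N)"
      "set e \<subseteq> set (binders M2)" "fv N \<subseteq> fv M2 \<union> set e"
      by auto
    with 2 show ?thesis by (intro exI[of _ e]) auto
  qed
qed auto

lemma tdom_debruijn: "tdom M = ddom (debruijn \<Omega> env M)"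
  unfolding tdom_def ddom_def using dsubterm_debruijn_None[of \<Omega> env M] by auto

lemma card_tdom_debruijn: "card (tdom M) = dsize (debruijn \<Omega> env M)"
  using tdom_debruijn finite_card_ddom by metis

lemma dtype_debruijn_closed:
  assumes "fv N \<inter> set env = {}"
  shows "dtype [] (debruijn \<Omega> env N) = infer_type \<Omega> N"
proof -
  have "loose (debruijn \<Omega> env N) = {}" using assms by (simp add: loose_debruijn)
  then show ?thesis using dtype_closed dtype_debruijn by metis
qed

lemma blueprint_of_debruijn:
  assumes "M \<in> LNF ord \<Omega>"
  shows "blueprint_of ord \<Omega> M = dblueprint (debruijn \<Omega> [] M)"
proof
  fix c
  have wf: "set (binders M) \<inter> fv M = {}" and typed: "infer_type \<Omega> M \<noteq> None" and "hrm ord M"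
    using assms unfolding LNF_iff wf_trm_def by auto
  show "blueprint_of ord \<Omega> M c = dblueprint (debruijn \<Omega> [] M) c"
  proof (cases "subt M c")
    case None
    then show ?thesis using dsubterm_debruijn_None[of \<Omega> "[]" M c]
      unfolding blueprint_of_def dblueprint_def stable_part_def tdom_def by auto
  next
    case (Some N)
    then obtain e where e: "dsubterm (debruijn \<Omega> [] M) c = Some (debruijn \<Omega> e N)"
      "set e \<subseteq> set (binders M)" "fv N \<subseteq> fv M \<union> set e"
      using dsubterm_debruijn[of M c N \<Omega> "[]"] by auto
    have stable: "c \<in> stable_part M \<longleftrightarrow> fv N \<inter> set e = {} \<and> kind N \<noteq> 2"
      using e(2,3) wf Some unfolding stable_part_def tdom_def by auto
    obtain \<psi> where "infer_type \<Omega> N = Some \<psi>" using infer_type_subt[OF typed Some] by auto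
    then have "has_type ord \<Omega> N \<psi>" "infer_type \<Omega> N = Some \<psi>"
      using hrm_subt[OF \<open>hrm ord M\<close> Some] has_type_iff by blast+
    then show ?thesis
      using stable e(1) Some type_of_eq dtype_debruijn_closed[of N e \<Omega>]
      unfolding blueprint_of_def dblueprint_def by (cases N) (auto simp: loose_debruijn)
  qed
qed

text \<open>The hypothesis on env: a free variable of M not bound by the innermost i + 1 binders lies
  below the i-th binder, as HRM guarantees for every subterm.\<close>
lemma dhrm_debruijn:
  assumes "hrm ord M" "inj ord"
    and "\<forall>i<length env. \<forall>z\<in>fv M. z \<notin> set (take (Suc i) env) \<longrightarrow> ord z < ord (env ! i)"
  shows "dhrm (debruijn \<Omega> env M)"
  using assms
proof (induction M arbitrary: env)
  case (Lam x R)
  have R: "hrm ord R" "x \<in> fv R" "\<forall>y\<in>fv R. ord y \<le> ord x" using Lam.prems by auto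
  have "\<forall>i<length (x # env). \<forall>z\<in>fv R.
    z \<notin> set (take (Suc i) (x # env)) \<longrightarrow> ord z < ord ((x # env) ! i)"
  proof (intro allI impI ballI)
    fix i z assume "i < length (x # env)" "z \<in> fv R" "z \<notin> set (take (Suc i) (x # env))"
    moreover have "ord z \<noteq> ord x" if "z \<noteq> x" using that Lam.prems(2) by (metis injD)
    ultimately show "ord z < ord ((x # env) ! i)"
      using R Lam.prems(3) by (cases i) (auto simp: order.strict_iff_order)
  qed
  moreover have "0 \<in> loose (debruijn \<Omega> (x # env) R)"
    unfolding loose_debruijn using R(2) by (force simp: image_iff)
  ultimately show ?case using Lam.IH[OF R(1) Lam.prems(2)] by simp
next
  case (App P Q)
  have Q_above: "\<forall>i<length env. \<forall>z\<in>fv Q. z \<notin> set (take (Suc i) env) \<longrightarrow> ord z < ord (env ! i)"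
    using App.prems(3) by auto
  have "\<exists>j\<in>loose (debruijn \<Omega> env Q). j \<le> i" if loose_P: "i \<in> loose (debruijn \<Omega> env P)" for i
  proof -
    obtain x where x: "x \<in> fv P" "x \<in> set env" "i = position env x"
      using loose_P by (auto simp: loose_debruijn)
    obtain z where z: "z \<in> fv Q" "ord x \<le> ord z" using App.prems(1) x(1) by auto
    have "z \<in> set (take (Suc i) env)"
      using Q_above z x by (metis leD nth_position position_less)
    then show ?thesis
      using z(1) position_le_if_in_take in_set_takeD unfolding loose_debruijn by fastforce
  qed
  moreover have "has_vars (debruijn \<Omega> env P) \<longrightarrow> has_vars (debruijn \<Omega> env Q)"
    unfolding has_vars_debruijn using App.prems(1) by auto
  ultimately show ?case using App by auto
qed simp_all

lemma debruijn_dLNF: "M \<in> LNF ord \<Omega> \<Longrightarrow> inj ord \<Longrightarrow> debruijn \<Omega> [] M \<in> dLNF"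
  using dtype_debruijn[of \<Omega> "[]" M] dhrm_debruijn[of ord M "[]" \<Omega>] dnormal_debruijn
  unfolding LNF_iff dLNF_def by auto

fun hrm_wrt :: "('v \<Rightarrow> 'v \<Rightarrow> bool) \<Rightarrow> 'v trm \<Rightarrow> bool" where
  "hrm_wrt R (Var x) = True"
| "hrm_wrt R (Lam x M) \<longleftrightarrow> hrm_wrt R M \<and> x \<in> fv M \<and> (\<forall>y\<in>fv M. R y x)"
| "hrm_wrt R (App M N) \<longleftrightarrow> hrm_wrt R M \<and> hrm_wrt R N \<and> (\<forall>y\<in>fv M. \<exists>z\<in>fv N. R y z)"

lemma hrm_eq_hrm_wrt: "hrm ord M = hrm_wrt (\<lambda>y z. ord y \<le> ord z) M"
  by (induction M) auto

lemma set_trm_eq: "set_trm T = fv T \<union> set (binders T)"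
  by (induction T) auto

lemma binders_map_trm: "binders (map_trm f T) = map f (binders T)"
  by (induction T) auto

lemma fv_map_trm: "inj_on f (set_trm T) \<Longrightarrow> fv (map_trm f T) = f ` fv T"
proof (induction T)
  case (Lam x T)
  then have "fv (map_trm f T) = f ` fv T" "inj_on f (insert x (fv T))"
    by (auto simp: set_trm_eq intro: inj_on_subset)
  moreover have "f ` (fv T - {x}) = f ` fv T - f ` {x}"
    using calculation(2) by (rule inj_on_image_set_diff) auto
  ultimately show ?case by simp
next
  case (App T1 T2)
  then show ?case by (auto intro: inj_on_subset)
qed simp

lemma hrm_wrt_map_trm:
  assumes "inj_on f (set_trm T)" "\<forall>u\<in>set_trm T. \<forall>w\<in>set_trm T. R u w \<longrightarrow> S (f u) (f w)"
  shows "hrm_wrt R T \<Longrightarrow> hrm_wrt S (map_trm f T)"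
  using assms
proof (induction T)
  case (Lam x T)
  have "inj_on f (set_trm T)" "\<forall>u\<in>set_trm T. \<forall>w\<in>set_trm T. R u w \<longrightarrow> S (f u) (f w)"
    using Lam.prems(2,3) by (auto intro: inj_on_subset)
  moreover have "fv T \<subseteq> set_trm T" by (simp add: set_trm_eq)
  ultimately show ?case using Lam by (auto simp: fv_map_trm)
next
  case (App T1 T2)
  have "inj_on f (set_trm T1)" "inj_on f (set_trm T2)"
    using App.prems(2) by (auto intro: inj_on_subset)
  then show ?case using App by (fastforce simp: fv_map_trm set_trm_eq)
qed simp

lemma finite_set_trm: "finite (set_trm T)"
  by (induction T) auto

lemma wf_trm_map_trm: "inj_on f (set_trm T) \<Longrightarrow> wf_trm T \<Longrightarrow> wf_trm (map_trm f T)"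
  unfolding wf_trm_def binders_map_trm fv_map_trm
  by (auto simp: distinct_map set_trm_eq fv_map_trm inj_on_def intro: inj_on_subset)

lemma position_map: "inj_on f (insert x (set env)) \<Longrightarrow> position (map f env) (f x) = position env x"
  by (induction env) (auto simp: inj_on_def)

lemma debruijn_map_trm:
  "inj_on f (set_trm T \<union> set env) \<Longrightarrow> \<forall>w\<in>set_trm T \<union> set env. \<Omega> (f w) = \<Omega>' w \<Longrightarrow>
   debruijn \<Omega> (map f env) (map_trm f T) = debruijn \<Omega>' env T"
proof (induction T arbitrary: env)
  case (Var x)
  then have inj: "inj_on f (insert x (set env))" by (auto intro: inj_on_subset)
  then have "f x \<in> f ` set env \<longleftrightarrow> x \<in> set env" by (auto simp: inj_on_def)
  then show ?case using Var.prems(2) position_map[OF inj] by simp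
next
  case (Lam x T)
  then show ?case using Lam.IH[of "x # env"] by (auto intro: inj_on_subset)
next
  case (App T1 T2)
  then show ?case by (auto intro: inj_on_subset)
qed

lemma fresh_var_above:
  fixes ord :: "'v \<Rightarrow> nat"
  assumes "inj ord" "infinite (\<Omega> -` {\<psi>})"
  obtains v where "\<Omega> v = \<psi>" "m < ord v"
proof -
  have "finite (ord -` {..m})" using assms(1) by (simp add: finite_vimageI)
  then have "infinite (\<Omega> -` {\<psi>} - ord -` {..m})" using Diff_infinite_finite assms(2) by blast
  then obtain v where "v \<in> \<Omega> -` {\<psi>}" "v \<notin> ord -` {..m}" using infinite_imp_nonempty by blast
  then show thesis by (intro that) auto
qed

lemma typed_rank_embedding:
  fixes ord :: "'v \<Rightarrow> nat" and \<Omega> :: "'v \<Rightarrow> 'a form" and \<Omega>' :: "'w \<Rightarrow> 'a form"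
    and r :: "'w \<Rightarrow> nat"
  assumes "inj ord" "\<forall>\<psi>. infinite (\<Omega> -` {\<psi>})" "finite V"
  shows "\<exists>f. inj_on f V \<and> (\<forall>w\<in>V. \<Omega> (f w) = \<Omega>' w) \<and>
    (\<forall>u\<in>V. \<forall>w\<in>V. r u < r w \<longrightarrow> ord (f u) < ord (f w))"
  using assms(3)
proof (induct V rule: finite_ranking_induct[where f = r])
  case (insert x S)
  obtain f where f: "inj_on f S" "\<forall>w\<in>S. \<Omega> (f w) = \<Omega>' w"
    "\<forall>u\<in>S. \<forall>w\<in>S. r u < r w \<longrightarrow> ord (f u) < ord (f w)"
    using insert.hyps(3) by blast
  show ?case
  proof (cases "x \<in> S")
    case True
    then show ?thesis using f by (intro exI[of _ f]) (simp add: insert_absorb)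
  next
    case False
    obtain v where v: "\<Omega> v = \<Omega>' x" "Max (insert 0 (ord ` f ` S)) < ord v"
      by (rule fresh_var_above[OF assms(1) assms(2)[rule_format]])
    have above: "ord (f y) < ord v" if "y \<in> S" for y
    proof -
      have "ord (f y) \<le> Max (insert 0 (ord ` f ` S))" using that insert.hyps(1) by simp
      then show ?thesis using v(2) by linarith
    qed
    let ?g = "f(x := v)"
    have "inj_on ?g (insert x S)"
      using f(1) False above by (auto simp: inj_on_insert intro!: inj_on_fun_updI)
    moreover have "\<forall>w\<in>insert x S. \<Omega> (?g w) = \<Omega>' w" using f(2) v(1) by simp
    moreover have "ord (?g u) < ord (?g w)" if "u \<in> insert x S" "w \<in> insert x S" "r u < r w" for u w
      using that f(3) above insert.hyps(2)[of w] False by (cases "u = x"; cases "w = x") auto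
    ultimately show ?thesis by blast
  qed
qed simp

section \<open>Realising nameless terms\<close>

text \<open>Canonical variables: Inl (k, t) names the k-th free leaf from the left, Inr (p, s) the
  binder at address p; the second component is the type.\<close>
type_synonym 'a cvar = "(nat \<times> 'a form) + (addr \<times> 'a form)"

definition cvar_type :: "'a cvar \<Rightarrow> 'a form" where
  "cvar_type = case_sum snd snd"

fun cvar_depth :: "'a cvar \<Rightarrow> nat" where
  "cvar_depth (Inl u) = 0"
| "cvar_depth (Inr (q, s)) = length q"

text \<open>named n p env X names the subterm X found at address p, where n free leaves lie to its
  left and env holds the enclosing binders; it also returns the updated leaf count.\<close>
fun named :: "nat \<Rightarrow> addr \<Rightarrow> 'a cvar list \<Rightarrow> 'a dterm \<Rightarrow> 'a cvar trm \<times> nat" where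
  "named n p env (DFree t) = (Var (Inl (n, t)), Suc n)"
| "named n p env (DBound i) = (Var (env ! i), n)"
| "named n p env (DLam s X) =
     (Lam (Inr (p, s)) (fst (named n (p @ [1]) (Inr (p, s) # env) X)),
      snd (named n (p @ [1]) (Inr (p, s) # env) X))"
| "named n p env (DApp X Y) =
     (App (fst (named n (p @ [1]) env X))
        (fst (named (snd (named n (p @ [1]) env X)) (p @ [2]) env Y)),
      snd (named (snd (named n (p @ [1]) env X)) (p @ [2]) env Y))"

definition binder_env :: "addr \<Rightarrow> 'a cvar list \<Rightarrow> bool" where
  "binder_env p env \<longleftrightarrow> (\<forall>u\<in>set env. \<exists>q s. u = Inr (q, s) \<and> strict_prefix q p) \<and>
     sorted_wrt (\<lambda>u v. cvar_depth v < cvar_depth u) env"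

lemma binder_env_Cons: "binder_env p env \<Longrightarrow> binder_env (p @ [1]) (Inr (p, s) # env)"
  unfolding binder_env_def by (auto simp: strict_prefix_def prefix_def)

lemma binder_env_snoc: "binder_env p env \<Longrightarrow> binder_env (p @ [i]) env"
  unfolding binder_env_def by (auto simp: strict_prefix_def prefix_def)

lemma binder_env_distinct: "binder_env p env \<Longrightarrow> distinct env"
  unfolding binder_env_def by (induction env) auto

lemma binder_env_nth:
  "binder_env p env \<Longrightarrow> i < length env \<Longrightarrow> \<exists>q s. env ! i = Inr (q, s) \<and> length q < length p"
  unfolding binder_env_def by (meson nth_mem prefix_length_less)

lemma binder_env_depth_less:
  "binder_env p env \<Longrightarrow> j < i \<Longrightarrow> i < length env \<Longrightarrow> cvar_depth (env ! i) < cvar_depth (env ! j)"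
  unfolding binder_env_def by (simp add: sorted_wrt_iff_nth_less)

lemma loose_DLam_bound: "loose (DLam s X) \<subseteq> {..<length env} \<Longrightarrow> loose X \<subseteq> {..<length (u # env)}"
proof
  fix i assume "loose (DLam s X) \<subseteq> {..<length env}" "i \<in> loose X"
  then show "i \<in> {..<length (u # env)}"
    by (cases i) (auto simp: mem_loose_DLam simp del: loose.simps)
qed

lemma snd_named: "snd (named n p env X) = n + free_leaves X"
  by (induction X arbitrary: n p env) auto

lemma debruijn_named:
  "binder_env p env \<Longrightarrow> loose X \<subseteq> {..<length env} \<Longrightarrow>
   debruijn cvar_type env (fst (named n p env X)) = X"
proof (induction X arbitrary: n p env)
  case (DFree t)
  have "Inl (n, t) \<notin> set env" using DFree.prems unfolding binder_env_def by auto
  then show ?case by (simp add: cvar_type_def)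
next
  case (DBound i)
  then have "i < length env" by simp
  then show ?case using position_nth[OF binder_env_distinct[OF DBound.prems(1)]] by simp
next
  case (DLam s X)
  have "loose X \<subseteq> {..<length (Inr (p, s) # env)}" using DLam.prems(2) by (rule loose_DLam_bound)
  then show ?case using DLam.IH[OF binder_env_Cons[OF DLam.prems(1)]] by (simp add: cvar_type_def)
next
  case (DApp X Y)
  then show ?case using binder_env_snoc[OF DApp.prems(1)] by simp
qed

lemma fv_named:
  "binder_env p env \<Longrightarrow> loose X \<subseteq> {..<length env} \<Longrightarrow> y \<in> fv (fst (named n p env X)) \<Longrightarrow>
   (\<exists>k t. y = Inl (k, t) \<and> n \<le> k \<and> k < n + free_leaves X) \<or> (\<exists>i\<in>loose X. y = env ! i)"
proof (induction X arbitrary: n p env y)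
  case (DFree t)
  then show ?case by auto
next
  case (DBound i)
  then show ?case by auto
next
  case (DLam s X)
  have y: "y \<in> fv (fst (named n (p @ [1]) (Inr (p, s) # env) X))" "y \<noteq> Inr (p, s)"
    using DLam.prems by auto
  from DLam.IH[OF binder_env_Cons[OF DLam.prems(1)] loose_DLam_bound[OF DLam.prems(2)] y(1)] y(2)
  show ?case by (auto simp: mem_loose_DLam nth_Cons' simp del: loose.simps split: if_splits)
next
  case (DApp X Y)
  let ?n1 = "snd (named n (p @ [1]) env X)"
  have n1: "?n1 = n + free_leaves X" using snd_named .
  from DApp.prems(3)
  have "y \<in> fv (fst (named n (p @ [1]) env X)) \<or> y \<in> fv (fst (named ?n1 (p @ [2]) env Y))"
    by auto
  then show ?case
  proof
    assume "y \<in> fv (fst (named n (p @ [1]) env X))"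
    from DApp.IH(1)[OF binder_env_snoc[OF DApp.prems(1)] _ this] DApp.prems(2) show ?thesis by auto
  next
    assume "y \<in> fv (fst (named ?n1 (p @ [2]) env Y))"
    from DApp.IH(2)[OF binder_env_snoc[OF DApp.prems(1)] _ this] DApp.prems(2) n1
    show ?thesis by auto
  qed
qed

lemma loose_in_fv_named:
  "binder_env p env \<Longrightarrow> loose X \<subseteq> {..<length env} \<Longrightarrow> i \<in> loose X \<Longrightarrow>
   env ! i \<in> fv (fst (named n p env X))"
proof (induction X arbitrary: n p env i)
  case (DLam s X)
  have "i < length env" using DLam.prems(2,3) by auto
  then have "env ! i \<noteq> Inr (p, s)" using binder_env_nth[OF DLam.prems(1)] by force
  moreover have "Suc i \<in> loose X" using DLam.prems(3) by (simp add: mem_loose_DLam del: loose.simps)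
  then have "(Inr (p, s) # env) ! Suc i \<in> fv (fst (named n (p @ [1]) (Inr (p, s) # env) X))"
    using DLam.IH[OF binder_env_Cons[OF DLam.prems(1)] loose_DLam_bound[OF DLam.prems(2)]] by blast
  ultimately show ?case by simp
next
  case (DApp X Y)
  then show ?case using binder_env_snoc[OF DApp.prems(1)] by auto
qed auto

lemma free_leaf_in_fv_named:
  "0 < free_leaves X \<Longrightarrow> \<exists>k t. Inl (k, t) \<in> fv (fst (named n p env X)) \<and> n \<le> k"
proof (induction X arbitrary: n p env)
  case (DApp X Y)
  show ?case
  proof (cases "0 < free_leaves X")
    case True
    then show ?thesis using DApp.IH(1)[of n "p @ [1]" env] by auto
  next
    case False
    then have "0 < free_leaves Y" using DApp.prems by simp
    then obtain k t
      where "Inl (k, t) \<in> fv (fst (named (snd (named n (p @ [1]) env X)) (p @ [2]) env Y))"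
        "snd (named n (p @ [1]) env X) \<le> k"
      using DApp.IH(2) by blast
    then show ?thesis using snd_named[of n "p @ [1]" env X] by (intro exI[of _ k] exI[of _ t]) auto
  qed
qed auto

lemma binders_named:
  "(\<forall>u\<in>set (binders (fst (named n p env X))). \<exists>q s. u = Inr (q, s) \<and> prefix p q) \<and>
   distinct (binders (fst (named n p env X)))"
proof (induction X arbitrary: n p env)
  case (DLam s X)
  let ?T = "fst (named n (p @ [1]) (Inr (p, s) # env) X)"
  have below: "\<forall>u\<in>set (binders ?T). \<exists>q s. u = Inr (q, s) \<and> prefix (p @ [1]) q"
    using DLam.IH by blast
  then have "Inr (p, s) \<notin> set (binders (fst (named n (p @ [1]) (Inr (p, s) # env) X)))"
    by (fastforce simp: prefix_def)
  then show ?case using DLam.IH[of n "p @ [1]" "Inr (p, s) # env"] below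
    by (fastforce simp: prefix_def)
next
  case (DApp X Y)
  let ?T1 = "fst (named n (p @ [1]) env X)"
  let ?T2 = "fst (named (snd (named n (p @ [1]) env X)) (p @ [2]) env Y)"
  have T1: "\<forall>u\<in>set (binders ?T1). \<exists>q s. u = Inr (q, s) \<and> prefix (p @ [1]) q"
    "distinct (binders ?T1)"
    using DApp.IH(1) by blast+
  have T2: "\<forall>u\<in>set (binders ?T2). \<exists>q s. u = Inr (q, s) \<and> prefix (p @ [2]) q"
    "distinct (binders ?T2)"
    using DApp.IH(2) by blast+
  have "set (binders ?T1) \<inter> set (binders ?T2) = {}"
  proof (rule ccontr)
    assume "set (binders ?T1) \<inter> set (binders ?T2) \<noteq> {}"
    then obtain u where "u \<in> set (binders ?T1)" "u \<in> set (binders ?T2)" by blast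
    then obtain q s where "prefix (p @ [1]) q" "prefix (p @ [2]) q" using T1 T2 by fastforce
    then show False by (auto simp: prefix_def)
  qed
  then show ?case using T1 T2 by (fastforce simp: prefix_def)
qed auto



text \<open>K bounds the number of free leaves, so that these are ranked below all binders.\<close>
fun cvar_rank :: "nat \<Rightarrow> 'a cvar \<Rightarrow> nat" where
  "cvar_rank K (Inl (k, t)) = k"
| "cvar_rank K (Inr (q, s)) = K + length q"

definition rank_le :: "nat \<Rightarrow> 'a cvar \<Rightarrow> 'a cvar \<Rightarrow> bool" where
  "rank_le K u w \<longleftrightarrow> u = w \<or> cvar_rank K u < cvar_rank K w"

lemma binder_env_rank_le:
  assumes "binder_env p env" "j \<le> i" "i < length env"
  shows "rank_le K (env ! i) (env ! j)"
proof (cases "j = i")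
  case False
  then have "cvar_depth (env ! i) < cvar_depth (env ! j)"
    using binder_env_depth_less[OF assms(1) _ assms(3)] assms(2) by simp
  moreover obtain q s q' s' where "env ! i = Inr (q, s)" "env ! j = Inr (q', s')"
    using binder_env_nth[OF assms(1)] assms(2,3) by (meson le_less_trans)
  ultimately show ?thesis unfolding rank_le_def by simp
qed (simp add: rank_le_def)

lemma named_operand_dominates:
  assumes env: "binder_env p env" and bound: "loose (DApp X Y) \<subseteq> {..<length env}"
    and hrm: "dhrm (DApp X Y)" and K: "n + free_leaves (DApp X Y) \<le> K"
    and y: "y \<in> fv (fst (named n (p @ [1]) env X))"
  shows "\<exists>z\<in>fv (fst (named (n + free_leaves X) (p @ [2]) env Y)). rank_le K y z"
proof -
  let ?U = "fst (named (n + free_leaves X) (p @ [2]) env Y)"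
  have envs: "binder_env (p @ [1]) env" "binder_env (p @ [2]) env"
    using binder_env_snoc[OF env] by auto
  have boundY: "loose Y \<subseteq> {..<length env}" using bound by simp
  from fv_named[OF envs(1) _ y] bound
  consider k t where "y = Inl (k, t)" "n \<le> k" "k < n + free_leaves X"
    | i where "i \<in> loose X" "y = env ! i"
    by auto
  then show ?thesis
  proof cases
    case 1
    then have "has_vars X" unfolding has_vars_def by auto
    then have "has_vars Y" using hrm by simp
    then consider "0 < free_leaves Y" | j where "j \<in> loose Y" unfolding has_vars_def by auto
    then show ?thesis
    proof cases
      case 1
      then obtain k' t' where "Inl (k', t') \<in> fv ?U" "n + free_leaves X \<le> k'"
        using free_leaf_in_fv_named by blast
      then show ?thesis using \<open>k < n + free_leaves X\<close> \<open>y = Inl (k, t)\<close>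
        unfolding rank_le_def by (intro bexI[of _ "Inl (k', t')"]) auto
    next
      case (2 j)
      then have "env ! j \<in> fv ?U" using loose_in_fv_named[OF envs(2) boundY] by blast
      moreover obtain q s where "env ! j = Inr (q, s)" using binder_env_nth[OF env] 2 boundY by blast
      ultimately show ?thesis using \<open>y = Inl (k, t)\<close> \<open>k < n + free_leaves X\<close> K
        unfolding rank_le_def by (intro bexI[of _ "env ! j"]) auto
    qed
  next
    case (2 i)
    then obtain j where j: "j \<in> loose Y" "j \<le> i" using hrm by auto
    moreover have "i < length env" using 2(1) bound by auto
    ultimately have "rank_le K (env ! i) (env ! j)" using binder_env_rank_le[OF env] by blast
    then show ?thesis using loose_in_fv_named[OF envs(2) boundY j(1)] 2(2) by blast
  qed
qed

lemma hrm_wrt_named: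
  "binder_env p env \<Longrightarrow> loose X \<subseteq> {..<length env} \<Longrightarrow> dhrm X \<Longrightarrow> n + free_leaves X \<le> K \<Longrightarrow>
   hrm_wrt (rank_le K) (fst (named n p env X))"
proof (induction X arbitrary: n p env)
  case (DLam s X)
  let ?env = "Inr (p, s) # env"
  have env: "binder_env (p @ [1]) ?env" using binder_env_Cons[OF DLam.prems(1)] .
  have bound: "loose X \<subseteq> {..<length ?env}" using loose_DLam_bound[OF DLam.prems(2)] .
  have "rank_le K y (Inr (p, s))" if y: "y \<in> fv (fst (named n (p @ [1]) ?env X))" for y
  proof -
    consider k t where "y = Inl (k, t)" "k < n + free_leaves X"
      | i where "i \<in> loose X" "y = ?env ! i"
      using fv_named[OF env bound y] by auto
    then show ?thesis
    proof cases
      case (2 i)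
      show ?thesis
      proof (cases i)
        case (Suc j)
        then have "j < length env" using 2(1) bound by auto
        then obtain q s' where "env ! j = Inr (q, s')" "length q < length p"
          using binder_env_nth[OF DLam.prems(1)] by blast
        then show ?thesis using 2 Suc unfolding rank_le_def by simp
      qed (use 2 in \<open>simp add: rank_le_def\<close>)
    qed (use DLam.prems(4) in \<open>auto simp: rank_le_def\<close>)
  qed
  moreover have "Inr (p, s) \<in> fv (fst (named n (p @ [1]) ?env X))"
    using loose_in_fv_named[OF env bound, of 0] DLam.prems(3) by simp
  ultimately show ?case using DLam.IH[OF env bound] DLam.prems(3,4) by auto
next
  case (DApp X Y)
  have "hrm_wrt (rank_le K) (fst (named n (p @ [1]) env X))"
    "hrm_wrt (rank_le K) (fst (named (n + free_leaves X) (p @ [2]) env Y))"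
    using DApp binder_env_snoc[OF DApp.prems(1)] by auto
  then show ?case
    using named_operand_dominates[OF DApp.prems] snd_named[of n "p @ [1]" env X] by auto
qed auto

lemma named_closed:
  assumes "loose X = {}"
  defines "T \<equiv> fst (named 0 [] [] X)"
  shows "debruijn cvar_type [] T = X" "wf_trm T"
    and "dhrm X \<Longrightarrow> hrm_wrt (rank_le (free_leaves X)) T"
proof -
  have env: "binder_env [] ([] :: 'a cvar list)" by (simp add: binder_env_def)
  have bound: "loose X \<subseteq> {..<length ([] :: 'a cvar list)}" using assms(1) by simp
  show "debruijn cvar_type [] T = X" unfolding T_def using debruijn_named[OF env bound] .
  show "dhrm X \<Longrightarrow> hrm_wrt (rank_le (free_leaves X)) T"
    unfolding T_def using hrm_wrt_named[OF env bound] by simp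
  have "\<forall>u\<in>set (binders T). \<exists>q s. u = Inr (q, s)" "distinct (binders T)"
    unfolding T_def using binders_named by blast+
  moreover have "\<forall>y\<in>fv T. \<exists>k t. y = Inl (k, t)"
    using fv_named[OF env bound] assms(1) unfolding T_def by fastforce
  ultimately show "wf_trm T" unfolding wf_trm_def by fastforce
qed

lemma dLNF_realisable:
  fixes ord :: "'v \<Rightarrow> nat" and \<Omega> :: "'v \<Rightarrow> 'a form"
  assumes "inj ord" "\<forall>\<psi>. infinite (\<Omega> -` {\<psi>})" "X \<in> dLNF"
  obtains M where "M \<in> LNF ord \<Omega>" "debruijn \<Omega> [] M = X"
proof -
  have X: "dtype [] X \<noteq> None" "dhrm X" "dnormal X" using assms(3) unfolding dLNF_def by auto
  have closed: "loose X = {}" using loose_empty_if_dtype[OF X(1)] .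
  define T where "T = fst (named 0 [] [] X)"
  obtain f :: "'a cvar \<Rightarrow> 'v" where f: "inj_on f (set_trm T)" "\<forall>w\<in>set_trm T. \<Omega> (f w) = cvar_type w"
    "\<forall>u\<in>set_trm T. \<forall>w\<in>set_trm T. cvar_rank (free_leaves X) u < cvar_rank (free_leaves X) w \<longrightarrow>
       ord (f u) < ord (f w)"
    using typed_rank_embedding[OF assms(1,2) finite_set_trm[of T],
        where \<Omega>' = cvar_type and r = "cvar_rank (free_leaves X)"]
    by blast
  define M where "M = map_trm f T"
  have M: "debruijn \<Omega> [] M = X"
    using debruijn_map_trm[of f T "[]" \<Omega> cvar_type] f(1,2) named_closed(1)[OF closed]
    unfolding M_def T_def by simp
  have "\<forall>u\<in>set_trm T. \<forall>w\<in>set_trm T. rank_le (free_leaves X) u w \<longrightarrow> ord (f u) \<le> ord (f w)"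
    using f(3) unfolding rank_le_def by (auto intro: less_imp_le)
  then have "hrm ord M"
    using hrm_wrt_map_trm[OF f(1) _ named_closed(3)[OF closed X(2), folded T_def]]
    unfolding M_def hrm_eq_hrm_wrt by simp
  moreover have "wf_trm M"
    unfolding M_def using wf_trm_map_trm[OF f(1) named_closed(2)[OF closed, folded T_def]] .
  moreover have "infer_type \<Omega> M \<noteq> None" "beta_normal M"
    using dtype_debruijn[of \<Omega> "[]" M] dnormal_debruijn[of \<Omega> "[]" M] M X by auto
  ultimately show thesis using that M unfolding LNF_iff by blast
qed

theorem lemma3p7:
  fixes ord :: "'v \<Rightarrow> nat" and \<Omega> :: "'v \<Rightarrow> 'a form"
    and M :: "'v trm" and \<phi> :: "'a form" and \<alpha> :: "'a sym ptree"
  assumes "inj ord"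
    and "\<forall>\<psi>. infinite (\<Omega> -` {\<psi>})"
    and "M \<in> LNF ord \<Omega>"
    and "has_type ord \<Omega> M \<phi>"
    and "blueprint \<alpha>"
    and "vcomp \<alpha> (blueprint_of ord \<Omega> M)"
  shows "\<exists>M'. M' \<in> LNF ord \<Omega> \<and> same_kind ord \<Omega> M' M \<and>
              blueprint_of ord \<Omega> M' = \<alpha> \<and> card (tdom M') \<le> card (tdom M)"
proof -
  let ?X = "debruijn \<Omega> [] M"
  obtain Y where Y: "Y \<in> dLNF" "dblueprint Y = \<alpha>" "dkind Y = dkind ?X" "dtype [] Y = dtype [] ?X"
    "dsize Y \<le> dsize ?X"
    using vcomp_dLNF[OF assms(6) blueprint_of_debruijn[OF assms(3)] debruijn_dLNF[OF assms(3,1)]]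
    by blast
  obtain M' where M': "M' \<in> LNF ord \<Omega>" "debruijn \<Omega> [] M' = Y"
    using dLNF_realisable[OF assms(1,2) Y(1)] by blast
  have "infer_type \<Omega> M' = infer_type \<Omega> M"
    using dtype_debruijn[of \<Omega> "[]" M'] dtype_debruijn[of \<Omega> "[]" M] M'(2) Y(4) by simp
  then have "has_type ord \<Omega> M' \<phi>" using M'(1) assms(4) unfolding has_type_iff LNF_iff by simp
  moreover have "kind M' = kind M"
    using dkind_debruijn[of \<Omega> "[]" M'] dkind_debruijn[of \<Omega> "[]" M] M'(2) Y(3) by simp
  ultimately have "same_kind ord \<Omega> M' M"
    using assms(4) type_of_eq unfolding same_kind_def by metis
  moreover have "blueprint_of ord \<Omega> M' = \<alpha>" using blueprint_of_debruijn[OF M'(1)] M'(2) Y(2) by simp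
  moreover have "card (tdom M') \<le> card (tdom M)"
    using card_tdom_debruijn[of M' \<Omega> "[]"] card_tdom_debruijn[of M \<Omega> "[]"] M'(2) Y(5) by simp
  ultimately show ?thesis using M'(1) by blast
qed

end
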